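(* Let $I,I'\subsetneq S$ and let $X,X'\subsetneq S$ with $\tau(I)\subset X$ and $\tau(I')\subset X'$. If $w_Ih_X=w_{I'}h_{X'}$ in $W$, then $I=I'$ and $X=X'$.
   Context: $(W,S)$ is the affine Weyl group of type $\tilde A_{n-1}$ ($n\ge2$), with $S=\{s_i:i\in\mathbb Z/n\mathbb Z\}$ identified with $\mathbb Z/n\mathbb Z$, and $\tau(s_i)=s_{i+1}$ (extended to subsets). For $X\subsetneq S$, choose $\aleph\in S\setminus X$, order $S$ as $\aleph<\aleph+1<\dots<\aleph-1$, write $X=\{x_1<\dots<x_d\}$ and set $h_X=s_{x_d}\cdots s_{x_1}$ (independent of $\aleph$). For $I\subsetneq S$, $w_I$ is the longest element of the finite parabolic subgroup $W_I$. *)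

theory Defs
  imports Main
begin

text \<open>Affine Weyl group of type tilde A_(n-1), realised as the group of affine
permutations of the integers generated by the simple reflections s_i, i in {0..<n}
(indices of S identified with Z/nZ as {0..<n}).\<close>

definition sgen :: "nat \<Rightarrow> nat \<Rightarrow> int \<Rightarrow> int" where
  "sgen n i j = (if j mod int n = int i then j + 1
                 else if j mod int n = int ((i + 1) mod n) then j - 1 else j)"

fun wprod :: "nat \<Rightarrow> nat list \<Rightarrow> int \<Rightarrow> int" where
  "wprod n [] = id"
| "wprod n (a # ws) = sgen n a \<circ> wprod n ws"

definition parab :: "nat \<Rightarrow> nat set \<Rightarrow> (int \<Rightarrow> int) set" where
  "parab n I = {wprod n ws | ws. set ws \<subseteq> I}"

definition clen :: "nat \<Rightarrow> (int \<Rightarrow> int) \<Rightarrow> nat" where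
  "clen n w = (LEAST k. \<exists>ws. length ws = k \<and> set ws \<subseteq> {0..<n} \<and> w = wprod n ws)"

definition longest :: "nat \<Rightarrow> nat set \<Rightarrow> int \<Rightarrow> int" where
  "longest n I = (THE w. w \<in> parab n I \<and> (\<forall>v \<in> parab n I. clen n v \<le> clen n w))"

definition tau :: "nat \<Rightarrow> nat set \<Rightarrow> nat set" where
  "tau n I = (\<lambda>i. (i + 1) mod n) ` I"

text \<open>h_X = s_{x_d} ... s_{x_1}, where x_1 < ... < x_d are the elements of X listed in the
cyclic order aleph < aleph+1 < ... < aleph-1, for aleph chosen as the least element of S - X.\<close>
definition hX :: "nat \<Rightarrow> nat set \<Rightarrow> int \<Rightarrow> int" where
  "hX n X = (let a = Min ({0..<n} - X)
             in wprod n (rev (filter (\<lambda>x. x \<in> X) (map (\<lambda>k. (a + k) mod n) [0..<n]))))"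

end

(*
  Realise W as the group of n-periodic permutations of the integers, s_i exchanging the
  positions congruent to i and i + 1 modulo n. Fix a residue a outside I. Inside W_I the length
  equals the number of inversions in the window [a + 1, a + n]: a generator changes that number
  by at most one, and bubble sort attains it. The elements of W_I are exactly the permutations
  that never move an entry across a position outside I, so w_I is the permutation reversing
  every maximal block of I-positions. On the other side, h_X sends p to p - 1 when p - 1 is an
  X-position and otherwise to the first non-X position at or above p. Using tau(I) <= X one
  checks that i is in I iff s_i is a left descent and s_(i+1) a right descent of w_I h_X.
  Hence w_I h_X determines I, then w_I, then h_X, and h_X (i + 1) = i exactly when i is in X.
*)

theory Submission
  imports Defs
begin

section \<open>Affine permutations\<close>

definition res_in :: "nat \<Rightarrow> nat set \<Rightarrow> int \<Rightarrow> bool" where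
  "res_in n A c \<longleftrightarrow> nat (c mod int n) \<in> A"

lemma res_in_add_n [simp]: "res_in n A (c + int n) \<longleftrightarrow> res_in n A c"
  by (simp add: res_in_def)

lemma res_in_of_nat: "i < n \<Longrightarrow> res_in n A (int i) \<longleftrightarrow> i \<in> A"
  by (simp add: res_in_def)

lemma not_res_in_if_mod_eq: "n > 0 \<Longrightarrow> c mod int n = int a \<Longrightarrow> a \<notin> A \<Longrightarrow> \<not> res_in n A c"
  by (simp add: res_in_def)

lemma res_in_insert:
  "n > 0 \<Longrightarrow> res_in n (insert y A) c \<longleftrightarrow> res_in n A c \<or> c mod int n = int y"
  by (auto simp: res_in_def nat_eq_iff)

lemma res_in_succ:
  assumes "n > 0"
  shows "res_in n A (c + 1) \<longleftrightarrow> (nat (c mod int n) + 1) mod n \<in> A"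
proof -
  have "int ((nat (c mod int n) + 1) mod n) = (c mod int n + 1) mod int n"
    using assms by (simp add: zmod_int add.commute)
  also have "\<dots> = (c + 1) mod int n"
    by (simp add: mod_add_left_eq)
  finally have "nat ((c + 1) mod int n) = (nat (c mod int n) + 1) mod n"
    by (metis nat_int)
  then show ?thesis
    by (simp add: res_in_def)
qed

lemma mod_add_one_neq: "n \<ge> 2 \<Longrightarrow> (x + 1) mod int n \<noteq> x mod int n"
proof
  assume "n \<ge> 2" "(x + 1) mod int n = x mod int n"
  then have "int n dvd 1"
    by (metis add_diff_cancel_left' mod_eq_dvd_iff)
  with \<open>n \<ge> 2\<close> show False
    by simp
qed

lemma sgen_eq:
  assumes "n \<ge> 2" "i < n"
  shows "sgen n i j =
    (if j mod int n = int i then j + 1 else if (j - 1) mod int n = int i then j - 1 else j)"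
proof -
  have "int ((i + 1) mod n) = (int i + 1) mod int n"
    by (simp add: zmod_int add.commute)
  moreover have "j mod int n = (int i + 1) mod int n \<longleftrightarrow> (j - 1) mod int n = int i mod int n"
    by (metis add_diff_cancel_right' diff_add_cancel mod_add_left_eq mod_diff_left_eq)
  moreover have "int i mod int n = int i"
    using assms by simp
  ultimately show ?thesis
    unfolding sgen_def by simp
qed

lemma sgen_sgen: "n \<ge> 2 \<Longrightarrow> i < n \<Longrightarrow> sgen n i (sgen n i j) = j"
  using mod_add_one_neq[of n j] mod_add_one_neq[of n "j - 1"] by (auto simp: sgen_eq)

lemma bij_sgen: "n \<ge> 2 \<Longrightarrow> i < n \<Longrightarrow> bij (sgen n i)"
  by (rule o_bij[where g = "sgen n i"]) (auto simp: sgen_sgen)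

lemma sgen_add_n: "sgen n i (j + int n) = sgen n i j + int n"
  unfolding sgen_def by simp

lemma wprod_append: "wprod n (xs @ ys) = wprod n xs \<circ> wprod n ys"
  by (induction xs) auto

lemma bij_wprod: "n \<ge> 2 \<Longrightarrow> set ws \<subseteq> {0..<n} \<Longrightarrow> bij (wprod n ws)"
  by (induction ws) (auto intro: bij_comp bij_sgen)

definition periodic :: "nat \<Rightarrow> (int \<Rightarrow> int) \<Rightarrow> bool" where
  "periodic n v \<longleftrightarrow> (\<forall>p. v (p + int n) = v p + int n)"

lemma periodic_comp: "periodic n u \<Longrightarrow> periodic n v \<Longrightarrow> periodic n (u \<circ> v)"
  by (simp add: periodic_def)

lemma periodic_wprod: "periodic n (wprod n ws)"
  by (induction ws) (auto simp: periodic_def sgen_add_n)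

lemma periodic_add_mult:
  assumes "periodic n v"
  shows "v (p + k * int n) = v p + k * int n"
proof (induction k rule: int_induct[where k = 0])
  case (step1 i)
  have "v (p + (i + 1) * int n) = v (p + i * int n + int n)"
    by (simp add: algebra_simps)
  also have "\<dots> = v (p + i * int n) + int n"
    using assms by (simp add: periodic_def)
  finally show ?case
    using step1 by (simp add: algebra_simps)
next
  case (step2 i)
  have "v (p + i * int n) = v (p + (i - 1) * int n + int n)"
    by (simp add: algebra_simps)
  also have "\<dots> = v (p + (i - 1) * int n) + int n"
    using assms by (simp add: periodic_def)
  finally show ?case
    using step2 by (simp add: algebra_simps)
qed simp

lemma periodic_inj_mod_eq:
  assumes "periodic n v" "inj v" "v p mod int n = v q mod int n"
  shows "p mod int n = q mod int n"
proof -
  obtain k where "v q = v p + k * int n"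
    using assms(3) mod_eq_dvd_iff[of "v q" "int n" "v p"]
    by (metis add.commute diff_add_cancel dvd_def mult.commute)
  also have "\<dots> = v (p + k * int n)"
    using periodic_add_mult[OF assms(1)] by simp
  finally have "q = p + k * int n"
    using assms(2) by (simp add: inj_eq)
  then show ?thesis
    by simp
qed

lemma periodic_eq_id_if_id_on_period:
  assumes "periodic n v" "n > 0" "\<And>p. p \<in> {b + 1..b + int n} \<Longrightarrow> v p = p"
  shows "v = id"
proof
  fix p
  define r where "r = b + 1 + (p - b - 1) mod int n"
  have "0 \<le> (p - b - 1) mod int n" "(p - b - 1) mod int n < int n"
    using assms(2) by simp_all
  then have "r \<in> {b + 1..b + int n}"
    unfolding r_def atLeastAtMost_iff by linarith
  moreover have "p = r + (p - b - 1) div int n * int n"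
    unfolding r_def using div_mult_mod_eq[of "p - b - 1" "int n"] by (simp add: algebra_simps)
  ultimately show "v p = id p"
    using periodic_add_mult[OF assms(1)] assms(3) by (metis id_apply)
qed

lemma strict_mono_on_intervalI:
  fixes f :: "int \<Rightarrow> int"
  assumes "\<And>p. p \<in> {lo..hi} \<Longrightarrow> p + 1 \<in> {lo..hi} \<Longrightarrow> f p < f (p + 1)"
  shows "strict_mono_on {lo..hi} f"
proof (rule strict_mono_onI)
  fix p q assume p: "p \<in> {lo..hi}" and q: "q \<in> {lo..hi}" and "p < q"
  then have "p + 1 \<le> q" by simp
  then have "q \<le> hi \<longrightarrow> f p < f q"
  proof (induction q rule: int_ge_induct)
    case base then show ?case using assms p by simp
  next
    case (step q)
    then show ?case using assms[of q] p by force
  qed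
  then show "f p < f q" using q by simp
qed

lemma strict_mono_on_self_map_eq_id:
  fixes f :: "int \<Rightarrow> int"
  assumes mono: "strict_mono_on {lo..hi} f" and into: "f ` {lo..hi} \<subseteq> {lo..hi}"
    and p: "p \<in> {lo..hi}"
  shows "f p = p"
proof -
  have "lo \<le> p" using p by simp
  then have "p \<le> hi \<longrightarrow> p \<le> f p"
  proof (induction p rule: int_ge_induct)
    case base then show ?case using into by (auto simp: image_subset_iff)
  next
    case (step q)
    then show ?case using strict_mono_onD[OF mono, of q "q + 1"] by auto
  qed
  moreover have "p \<le> hi" using p by simp
  then have "lo \<le> p \<longrightarrow> f p \<le> p"
  proof (induction p rule: int_le_induct)
    case base then show ?case using into by (auto simp: image_subset_iff)
  next
    case (step q)
    then show ?case using strict_mono_onD[OF mono, of "q - 1" q] by auto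
  qed
  ultimately show ?thesis using p by simp
qed

section \<open>Inversions in a window and the lower bound for the length\<close>

definition window :: "nat \<Rightarrow> nat \<Rightarrow> int set" where
  "window n a = {int a + 1..int a + int n}"

definition inversions :: "nat \<Rightarrow> nat \<Rightarrow> (int \<Rightarrow> int) \<Rightarrow> (int \<times> int) set" where
  "inversions n a v = {(p, q). p \<in> window n a \<and> q \<in> window n a \<and> p < q \<and> v q < v p}"

lemma window_mod_eq_imp_eq:
  assumes "p \<in> window n a" "q \<in> window n a" "p mod int n = q mod int n"
  shows "p = q"
proof -
  have "(p - int a - 1) mod int n = (q - int a - 1) mod int n"
    using assms(3) by (metis mod_diff_left_eq)
  moreover have "(p - int a - 1) mod int n = p - int a - 1" "(q - int a - 1) mod int n = q - int a - 1"
    using assms(1,2) by (simp_all add: window_def)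
  ultimately show ?thesis
    by simp
qed

lemma finite_inversions: "finite (inversions n a v)"
proof (rule finite_subset)
  show "inversions n a v \<subseteq> window n a \<times> window n a"
    by (auto simp: inversions_def)
qed (simp add: window_def)

lemma new_inversion_of_sgen_comp:
  assumes "n \<ge> 2" "x < n" "p < q" "sgen n x q < sgen n x p"
  shows "p mod int n = int x \<and> q = p + 1"
  using assms(3,4) by (auto simp: sgen_eq[OF assms(1,2)] split: if_splits)

lemma card_inversions_sgen_comp_le:
  assumes n: "n \<ge> 2" "x < n" and v: "periodic n v" "inj v"
  shows "card (inversions n a (sgen n x \<circ> v)) \<le> card (inversions n a v) + 1"
proof -
  define D where
    "D = {(p, q). p \<in> window n a \<and> q \<in> window n a \<and> v p mod int n = int x \<and> v q = v p + 1}"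
  have "inversions n a (sgen n x \<circ> v) \<subseteq> inversions n a v \<union> D"
  proof
    fix u assume u: "u \<in> inversions n a (sgen n x \<circ> v)"
    obtain p q where pq: "u = (p, q)" by fastforce
    show "u \<in> inversions n a v \<union> D"
    proof (cases "v q < v p")
      case False
      have "p < q" using u pq by (auto simp: inversions_def)
      then have "v p \<noteq> v q" using v(2) by (auto simp: inj_eq)
      with False have "v p < v q" by simp
      then have "v p mod int n = int x \<and> v q = v p + 1"
        using new_inversion_of_sgen_comp[OF n] u pq by (auto simp: inversions_def)
      then show ?thesis using u pq by (auto simp: inversions_def D_def)
    qed (use u pq in \<open>auto simp: inversions_def\<close>)
  qed
  moreover have "D \<subseteq> window n a \<times> window n a"
    by (auto simp: D_def)
  then have "finite D"
    by (rule finite_subset) (simp add: window_def)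
  moreover have "card D \<le> 1"
  proof -
    have "u = u'" if "u \<in> D" "u' \<in> D" for u u'
    proof -
      obtain p q p' q' where pq: "u = (p, q)" "u' = (p', q')" by fastforce
      have p: "p \<in> window n a" "p' \<in> window n a" "v p mod int n = v p' mod int n"
        using that pq by (auto simp: D_def)
      then have "p = p'"
        using window_mod_eq_imp_eq periodic_inj_mod_eq[OF v] by blast
      then have "v q = v q'"
        using that pq by (auto simp: D_def)
      then show ?thesis
        using \<open>p = p'\<close> v(2) pq by (simp add: inj_eq)
    qed
    then show ?thesis
      using \<open>finite D\<close> by (simp add: card_le_Suc0_iff_eq)
  qed
  ultimately have "card (inversions n a (sgen n x \<circ> v)) \<le> card (inversions n a v \<union> D)"
    by (intro card_mono) (simp_all add: finite_inversions)
  also have "\<dots> \<le> card (inversions n a v) + card D"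
    by (rule card_Un_le)
  finally show ?thesis
    using \<open>card D \<le> 1\<close> by simp
qed

lemma card_inversions_wprod_le:
  "n \<ge> 2 \<Longrightarrow> set ws \<subseteq> {0..<n} \<Longrightarrow> card (inversions n a (wprod n ws)) \<le> length ws"
proof (induction ws)
  case Nil
  have "inversions n a id = {}" by (auto simp: inversions_def)
  then show ?case by (simp add: id_def)
next
  case (Cons x ws)
  then have "card (inversions n a (sgen n x \<circ> wprod n ws)) \<le> card (inversions n a (wprod n ws)) + 1"
    by (intro card_inversions_sgen_comp_le)
      (auto simp: periodic_wprod bij_is_inj[OF bij_wprod])
  with Cons show ?case
    by (simp add: comp_def)
qed

lemma clen_wprod_le: "set ws \<subseteq> {0..<n} \<Longrightarrow> clen n (wprod n ws) \<le> length ws"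
  unfolding clen_def by (rule Least_le) blast

lemma card_inversions_le_clen:
  assumes "n \<ge> 2" "set ws \<subseteq> {0..<n}"
  shows "card (inversions n a (wprod n ws)) \<le> clen n (wprod n ws)"
proof -
  have "\<exists>ws'. length ws' = clen n (wprod n ws) \<and> set ws' \<subseteq> {0..<n} \<and> wprod n ws = wprod n ws'"
    unfolding clen_def by (rule LeastI_ex) (use assms(2) in blast)
  then obtain ws' where "length ws' = clen n (wprod n ws)" "set ws' \<subseteq> {0..<n}"
    "wprod n ws = wprod n ws'"
    by blast
  then show ?thesis
    using card_inversions_wprod_le[OF assms(1), of ws' a] by simp
qed

section \<open>Parabolic subgroups as cut-preserving permutations\<close>

text \<open>A position \<open>c\<close> outside \<open>I\<close> is a wall between \<open>c\<close> and \<open>c + 1\<close> that no \<open>s\<^sub>i\<close>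
  with \<open>i \<in> I\<close> moves an entry across; these permutations turn out to be exactly \<open>W\<^sub>I\<close>.\<close>

definition cut_preserving :: "nat \<Rightarrow> nat set \<Rightarrow> (int \<Rightarrow> int) \<Rightarrow> bool" where
  "cut_preserving n I v \<longleftrightarrow>
    periodic n v \<and> inj v \<and> (\<forall>c p. \<not> res_in n I c \<longrightarrow> (p \<le> c \<longleftrightarrow> v p \<le> c))"

lemma cut_preservingD:
  "cut_preserving n I v \<Longrightarrow> \<not> res_in n I c \<Longrightarrow> p \<le> c \<longleftrightarrow> v p \<le> c"
  unfolding cut_preserving_def by blast

lemma cut_preserving_periodic: "cut_preserving n I v \<Longrightarrow> periodic n v"
  unfolding cut_preserving_def by (elim conjE)

lemma cut_preserving_inj: "cut_preserving n I v \<Longrightarrow> inj v"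
  unfolding cut_preserving_def by (elim conjE)

lemma cut_preserving_comp:
  assumes "cut_preserving n I u" "cut_preserving n I v"
  shows "cut_preserving n I (u \<circ> v)"
proof -
  have "\<forall>c p. \<not> res_in n I c \<longrightarrow> (p \<le> c \<longleftrightarrow> (u \<circ> v) p \<le> c)"
  proof (intro allI impI)
    fix c p assume c: "\<not> res_in n I c"
    have "p \<le> c \<longleftrightarrow> v p \<le> c"
      by (rule cut_preservingD[OF assms(2) c])
    also have "\<dots> \<longleftrightarrow> u (v p) \<le> c"
      by (rule cut_preservingD[OF assms(1) c])
    finally show "p \<le> c \<longleftrightarrow> (u \<circ> v) p \<le> c"
      by simp
  qed
  moreover have "periodic n (u \<circ> v)" "inj (u \<circ> v)"
    using assms by (auto intro: periodic_comp inj_compose cut_preserving_periodic cut_preserving_inj)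
  ultimately show ?thesis
    unfolding cut_preserving_def by blast
qed

lemma cut_preserving_sgen:
  assumes n: "n \<ge> 2" and i: "i \<in> I" and I: "I \<subseteq> {0..<n}"
  shows "cut_preserving n I (sgen n i)"
proof -
  have iN: "i < n" using i I by auto
  have "\<forall>c p. \<not> res_in n I c \<longrightarrow> (p \<le> c \<longleftrightarrow> sgen n i p \<le> c)"
  proof (intro allI impI)
    fix c p assume "\<not> res_in n I c"
    then have "c mod int n \<noteq> int i"
      using i by (auto simp: res_in_def)
    then have "p mod int n = int i \<Longrightarrow> p \<noteq> c" "(p - 1) mod int n = int i \<Longrightarrow> p - 1 \<noteq> c"
      by auto
    then show "p \<le> c \<longleftrightarrow> sgen n i p \<le> c"
      unfolding sgen_eq[OF n iN] by (simp split: if_split) linarith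
  qed
  moreover have "periodic n (sgen n i)"
    by (simp add: periodic_def sgen_add_n)
  ultimately show ?thesis
    using bij_is_inj[OF bij_sgen[OF n iN]] unfolding cut_preserving_def by blast
qed

lemma cut_preserving_wprod:
  "n \<ge> 2 \<Longrightarrow> I \<subseteq> {0..<n} \<Longrightarrow> set ws \<subseteq> I \<Longrightarrow> cut_preserving n I (wprod n ws)"
proof (induction ws)
  case Nil
  then show ?case by (simp add: cut_preserving_def periodic_def inj_on_id)
next
  case (Cons x ws)
  then have "cut_preserving n I (sgen n x)" "cut_preserving n I (wprod n ws)"
    using cut_preserving_sgen by auto
  then have "cut_preserving n I (sgen n x \<circ> wprod n ws)"
    by (rule cut_preserving_comp)
  then show ?case
    by (simp only: wprod.simps)
qed

lemma cut_preserving_if_parab: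
  "n \<ge> 2 \<Longrightarrow> I \<subseteq> {0..<n} \<Longrightarrow> v \<in> parab n I \<Longrightarrow> cut_preserving n I v"
  unfolding parab_def using cut_preserving_wprod by blast

text \<open>For \<open>a \<notin> I\<close> the window \<open>[a + 1, a + n]\<close> is bounded by walls on both sides.\<close>

lemma cut_preserving_window:
  assumes "cut_preserving n I v" "a < n" "a \<notin> I" "p \<in> window n a"
  shows "v p \<in> window n a"
proof -
  have "\<not> res_in n I (int a)" "\<not> res_in n I (int a + int n)"
    using assms(2,3) by (simp_all add: res_in_of_nat)
  then have "\<not> v p \<le> int a" "v p \<le> int a + int n"
    using cut_preservingD[OF assms(1), of "int a" p] cut_preservingD[OF assms(1), of "int a + int n" p]
      assms(4)
    by (auto simp: window_def)
  then show ?thesis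
    by (simp add: window_def)
qed

lemma cut_preserving_eq_id:
  assumes v: "cut_preserving n I v" and a: "a < n" "a \<notin> I"
    and mono: "strict_mono_on (window n a) v"
  shows "v = id"
proof (rule periodic_eq_id_if_id_on_period)
  show "periodic n v" using v by (rule cut_preserving_periodic)
  show "n > 0" using a by simp
  have "v ` window n a \<subseteq> window n a"
    using cut_preserving_window[OF v a] by blast
  then show "v p = p" if "p \<in> {int a + 1..int a + int n}" for p
    using strict_mono_on_self_map_eq_id mono that unfolding window_def by blast
qed

definition block_pairs :: "nat \<Rightarrow> nat \<Rightarrow> nat set \<Rightarrow> (int \<times> int) set" where
  "block_pairs n a I = {(p, q). p \<in> window n a \<and> q \<in> window n a \<and> p < q \<and>
     (\<forall>c. p \<le> c \<and> c < q \<longrightarrow> res_in n I c)}"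

lemma finite_block_pairs: "finite (block_pairs n a I)"
proof (rule finite_subset)
  show "block_pairs n a I \<subseteq> window n a \<times> window n a"
    by (auto simp: block_pairs_def)
qed (simp add: window_def)

lemma inversions_subset_block_pairs:
  assumes "cut_preserving n I v"
  shows "inversions n a v \<subseteq> block_pairs n a I"
proof
  fix u assume u: "u \<in> inversions n a v"
  obtain p q where pq: "u = (p, q)" "p \<in> window n a" "q \<in> window n a" "p < q" "v q < v p"
    using u unfolding inversions_def by auto
  have "res_in n I c" if "p \<le> c" "c < q" for c
  proof (rule ccontr)
    assume "\<not> res_in n I c"
    then have "v p \<le> c" "\<not> v q \<le> c"
      using cut_preservingD[OF assms, of c p] cut_preservingD[OF assms, of c q] that by auto
    with \<open>v q < v p\<close> show False
      by simp
  qed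
  then show "u \<in> block_pairs n a I"
    using pq unfolding block_pairs_def by auto
qed

lemma strict_mono_on_window_iff:
  assumes "inj v"
  shows "strict_mono_on (window n a) v \<longleftrightarrow> inversions n a v = {}"
proof
  assume "strict_mono_on (window n a) v"
  then show "inversions n a v = {}"
    by (auto simp: inversions_def dest: strict_mono_onD)
next
  assume none: "inversions n a v = {}"
  show "strict_mono_on (window n a) v"
  proof (rule strict_mono_onI)
    fix p q assume "p \<in> window n a" "q \<in> window n a" "p < q"
    moreover have "v p \<noteq> v q"
      using \<open>p < q\<close> assms by (auto simp: inj_eq)
    ultimately show "v p < v q"
      using none by (force simp: inversions_def)
  qed
qed

lemma adjacent_descent_if_inversions:
  assumes "inj v" "inversions n a v \<noteq> {}"
  obtains p where "p \<in> window n a" "p + 1 \<in> window n a" "v (p + 1) < v p"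
proof -
  have "\<exists>p. p \<in> window n a \<and> p + 1 \<in> window n a \<and> v (p + 1) < v p"
  proof (rule ccontr)
    assume none: "\<not> ?thesis"
    have "v p < v (p + 1)" if "p \<in> window n a" "p + 1 \<in> window n a" for p
    proof -
      have "v p \<noteq> v (p + 1)"
        using assms(1) by (auto simp: inj_eq)
      with none that show ?thesis
        by fastforce
    qed
    then have "strict_mono_on (window n a) v"
      using strict_mono_on_intervalI[of "int a + 1" "int a + int n" v] unfolding window_def by blast
    with assms show False
      by (simp add: strict_mono_on_window_iff)
  qed
  with that show thesis
    by blast
qed

lemma sgen_on_window:
  assumes n: "n \<ge> 2" and p: "p \<in> window n a" "p + 1 \<in> window n a" and x: "x \<in> window n a"
  shows "sgen n (nat (p mod int n)) x = (if x = p then p + 1 else if x = p + 1 then p else x)"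
proof -
  define i where "i = nat (p mod int n)"
  have i: "int i = p mod int n" "i < n"
    using n by (simp_all add: i_def nat_less_iff)
  have "x mod int n = int i \<longleftrightarrow> x = p"
    using window_mod_eq_imp_eq[OF x p(1)] i(1) by auto
  moreover have "(x - 1) mod int n = int i \<longleftrightarrow> x = p + 1"
  proof
    assume "(x - 1) mod int n = int i"
    then have "x mod int n = (p + 1) mod int n"
      using i(1) by (metis diff_add_cancel mod_add_left_eq)
    then show "x = p + 1"
      using window_mod_eq_imp_eq[OF x p(2)] by simp
  qed (use i in simp)
  ultimately show ?thesis
    unfolding i_def[symmetric] by (simp add: sgen_eq[OF n i(2)])
qed

text \<open>Right multiplication by the adjacent transposition at a descent removes exactly that
  inversion, which is the step of bubble sort.\<close>

lemma card_inversions_comp_sgen_less: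
  assumes n: "n \<ge> 2" and p: "p \<in> window n a" "p + 1 \<in> window n a" "v (p + 1) < v p"
  shows "card (inversions n a (v \<circ> sgen n (nat (p mod int n)))) < card (inversions n a v)"
proof -
  define s where "s = sgen n (nat (p mod int n))"
  have s: "s x = (if x = p then p + 1 else if x = p + 1 then p else x)" if "x \<in> window n a" for x
    unfolding s_def using sgen_on_window[OF n p(1,2) that] .
  then have s_window: "s x \<in> window n a" if "x \<in> window n a" for x
    using that p by auto
  have s_inj: "inj_on s (window n a)"
    by (rule inj_onI) (auto simp: s split: if_splits)
  define swap where "swap = (\<lambda>(x::int, y::int). (s x, s y))"
  have "swap ` inversions n a (v \<circ> s) \<subseteq> inversions n a v - {(p, p + 1)}"
  proof
    fix u assume "u \<in> swap ` inversions n a (v \<circ> s)"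
    then obtain x y where xy: "x \<in> window n a" "y \<in> window n a" "x < y" "v (s y) < v (s x)"
      and u: "u = (s x, s y)"
      unfolding swap_def inversions_def by auto
    have "s x < s y \<and> (s x, s y) \<noteq> (p, p + 1)"
      using s[OF xy(1)] s[OF xy(2)] xy(3,4) p(3) by (auto split: if_splits)
    then show "u \<in> inversions n a v - {(p, p + 1)}"
      using u s_window xy unfolding inversions_def by auto
  qed
  moreover have "inj_on swap (inversions n a (v \<circ> s))"
    using s_inj by (auto simp: swap_def inversions_def inj_on_def)
  ultimately have "card (inversions n a (v \<circ> s)) \<le> card (inversions n a v - {(p, p + 1)})"
    by (metis card_image card_mono finite_Diff finite_inversions)
  also have "\<dots> < card (inversions n a v)"
    using p finite_inversions by (intro card_Diff1_less) (auto simp: inversions_def)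
  finally show ?thesis
    unfolding s_def .
qed

lemma res_in_if_descent:
  assumes "cut_preserving n I v" "v (p + 1) < v p"
  shows "res_in n I p"
proof (rule ccontr)
  assume "\<not> res_in n I p"
  then have "v p \<le> p" "\<not> v (p + 1) \<le> p"
    using cut_preservingD[OF assms(1), of p p] cut_preservingD[OF assms(1), of p "p + 1"] by auto
  with assms(2) show False
    by simp
qed

lemma cut_preserving_imp_wprod:
  assumes n: "n \<ge> 2" and I: "I \<subseteq> {0..<n}" and a: "a < n" "a \<notin> I"
  shows "cut_preserving n I v \<Longrightarrow>
    \<exists>ws. set ws \<subseteq> I \<and> length ws \<le> card (inversions n a v) \<and> v = wprod n ws"
proof (induction "card (inversions n a v)" arbitrary: v rule: less_induct)
  case less
  note v = \<open>cut_preserving n I v\<close>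
  show ?case
  proof (cases "inversions n a v = {}")
    case True
    then have "v = id"
      using cut_preserving_eq_id[OF v a] strict_mono_on_window_iff[OF cut_preserving_inj[OF v]]
      by simp
    then show ?thesis
      by (intro exI[of _ "[]"]) simp
  next
    case False
    then obtain p where p: "p \<in> window n a" "p + 1 \<in> window n a" "v (p + 1) < v p"
      using adjacent_descent_if_inversions[OF cut_preserving_inj[OF v]] by blast
    define i where "i = nat (p mod int n)"
    have i: "i \<in> I" "i < n"
      using res_in_if_descent[OF v p(3)] I unfolding i_def res_in_def by auto
    define v' where "v' = v \<circ> sgen n i"
    have v': "cut_preserving n I v'"
      unfolding v'_def by (rule cut_preserving_comp[OF v cut_preserving_sgen[OF n i(1) I]])
    have less: "card (inversions n a v') < card (inversions n a v)"
      unfolding v'_def i_def by (rule card_inversions_comp_sgen_less[OF n p])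
    obtain ws where ws: "set ws \<subseteq> I" "length ws \<le> card (inversions n a v')" "v' = wprod n ws"
      using less.hyps[OF less v'] by blast
    have "wprod n (ws @ [i]) = v' \<circ> sgen n i"
      using ws(3) by (simp add: wprod_append)
    also have "\<dots> = v"
      unfolding v'_def using sgen_sgen[OF n i(2)] by (auto simp: fun_eq_iff)
    finally show ?thesis
      using ws i less by (intro exI[of _ "ws @ [i]"]) auto
  qed
qed

lemma parab_eq_cut_preserving:
  assumes "n \<ge> 2" "I \<subseteq> {0..<n}" "a < n" "a \<notin> I"
  shows "parab n I = {v. cut_preserving n I v}"
  using cut_preserving_if_parab[OF assms(1,2)] cut_preserving_imp_wprod[OF assms]
  unfolding parab_def by blast

lemma clen_eq_card_inversions:
  assumes n: "n \<ge> 2" and I: "I \<subseteq> {0..<n}" and a: "a < n" "a \<notin> I" and v: "v \<in> parab n I"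
  shows "clen n v = card (inversions n a v)"
proof (rule antisym)
  obtain ws where ws: "set ws \<subseteq> I" "length ws \<le> card (inversions n a v)" "v = wprod n ws"
    using cut_preserving_imp_wprod[OF n I a cut_preserving_if_parab[OF n I v]] by blast
  then have "clen n v \<le> length ws"
    using clen_wprod_le[of ws n] I by auto
  with ws(2) show "clen n v \<le> card (inversions n a v)"
    by simp
  obtain ws' where "set ws' \<subseteq> I" "v = wprod n ws'"
    using v unfolding parab_def by blast
  then show "card (inversions n a v) \<le> clen n v"
    using card_inversions_le_clen[OF n, of ws' a] I by auto
qed

section \<open>The longest element of a parabolic subgroup\<close>

text \<open>The positions of \<open>\<int>\<close> split into maximal blocks \<open>{c + 1..c'}\<close> with \<open>c, c'\<close> outside \<open>I\<close>
  and all of \<open>c + 1..c' - 1\<close> in \<open>I\<close>. For \<open>p\<close> in such a block \<open>dist_up\<close> is \<open>c' - p\<close> and \<open>dist_down\<close>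
  is \<open>p - 1 - c\<close>, so \<open>block_rev\<close> is \<open>p \<mapsto> c + c' + 1 - p\<close>, the reversal of every block.\<close>

definition dist_up :: "nat \<Rightarrow> nat set \<Rightarrow> int \<Rightarrow> nat" where
  "dist_up n I p = (LEAST k. \<not> res_in n I (p + int k))"

definition dist_down :: "nat \<Rightarrow> nat set \<Rightarrow> int \<Rightarrow> nat" where
  "dist_down n I p = (LEAST k. \<not> res_in n I (p - 1 - int k))"

definition block_rev :: "nat \<Rightarrow> nat set \<Rightarrow> int \<Rightarrow> int" where
  "block_rev n I p = p + int (dist_up n I p) - int (dist_down n I p)"

lemma dist_up_le: "\<not> res_in n I (p + int k) \<Longrightarrow> dist_up n I p \<le> k"
  unfolding dist_up_def by (rule Least_le)

lemma dist_down_le: "\<not> res_in n I (p - 1 - int k) \<Longrightarrow> dist_down n I p \<le> k"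
  unfolding dist_down_def by (rule Least_le)

lemma dist_up_add_n: "dist_up n I (p + int n) = dist_up n I p"
proof -
  have "p + int n + int k = (p + int k) + int n" for k
    by simp
  then show ?thesis
    unfolding dist_up_def by (metis res_in_add_n)
qed

lemma dist_down_add_n: "dist_down n I (p + int n) = dist_down n I p"
proof -
  have "p + int n - 1 - int k = (p - 1 - int k) + int n" for k
    by simp
  then show ?thesis
    unfolding dist_down_def by (metis res_in_add_n)
qed

lemma periodic_block_rev: "periodic n (block_rev n I)"
  by (simp add: periodic_def block_rev_def dist_up_add_n dist_down_add_n)

context
  fixes n :: nat and I :: "nat set" and a :: nat
  assumes n: "n \<ge> 2" and a: "a < n" "a \<notin> I"
begin

lemma dist_up_spec: "\<not> res_in n I (p + int (dist_up n I p))"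
proof -
  define k where "k = nat ((int a - p) mod int n)"
  have "(p + int k) mod int n = int a"
    using n a by (simp add: k_def mod_add_right_eq)
  then have "\<not> res_in n I (p + int k)"
    using n a by (simp add: not_res_in_if_mod_eq)
  then show ?thesis
    unfolding dist_up_def by (rule LeastI)
qed

lemma dist_down_spec: "\<not> res_in n I (p - 1 - int (dist_down n I p))"
proof -
  define k where "k = nat ((p - 1 - int a) mod int n)"
  have "(p - 1 - int k) mod int n = int a"
    using n a by (simp add: k_def mod_diff_right_eq)
  then have "\<not> res_in n I (p - 1 - int k)"
    using n a by (simp add: not_res_in_if_mod_eq)
  then show ?thesis
    unfolding dist_down_def by (rule LeastI)
qed

lemma block_rev_step:
  assumes "res_in n I p"
  shows "block_rev n I p = block_rev n I (p + 1) + 1"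
proof -
  have "dist_up n I p = Suc (LEAST k. \<not> res_in n I (p + int (Suc k)))"
    unfolding dist_up_def by (rule Least_Suc) (use dist_up_spec[of p] assms in \<open>auto simp: dist_up_def\<close>)
  then have up: "dist_up n I p = Suc (dist_up n I (p + 1))"
    unfolding dist_up_def by (simp add: add.assoc)
  have "dist_down n I (p + 1) = Suc (LEAST k. \<not> res_in n I (p + 1 - 1 - int (Suc k)))"
    unfolding dist_down_def
    by (rule Least_Suc) (use dist_down_spec[of "p + 1"] assms in \<open>auto simp: dist_down_def\<close>)
  then have down: "dist_down n I (p + 1) = Suc (dist_down n I p)"
    unfolding dist_down_def by (simp add: algebra_simps)
  show ?thesis
    unfolding block_rev_def up down by simp
qed

lemma block_rev_cut:
  assumes "\<not> res_in n I c"
  shows "p \<le> c \<longleftrightarrow> block_rev n I p \<le> c"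
proof (cases "p \<le> c")
  case True
  then have "dist_up n I p \<le> nat (c - p)"
    using dist_up_le[of n I p "nat (c - p)"] assms by simp
  with True show ?thesis
    unfolding block_rev_def by linarith
next
  case False
  then have "dist_down n I p \<le> nat (p - 1 - c)"
    using dist_down_le[of n I p "nat (p - 1 - c)"] assms by simp
  with False show ?thesis
    unfolding block_rev_def by linarith
qed

lemma block_rev_less:
  assumes "p < q" "\<And>c. p \<le> c \<Longrightarrow> c < q \<Longrightarrow> res_in n I c"
  shows "block_rev n I q < block_rev n I p"
proof -
  have "k \<le> nat (q - p) \<longrightarrow> block_rev n I (p + int k) = block_rev n I p - int k" for k
  proof (induction k)
    case (Suc k)
    show ?case
    proof
      assume "Suc k \<le> nat (q - p)"
      then have "res_in n I (p + int k)"
        using assms(2) by simp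
      then have "block_rev n I (p + int k) = block_rev n I (p + int (Suc k)) + 1"
        using block_rev_step[of "p + int k"] by (simp add: ac_simps)
      with Suc.IH \<open>Suc k \<le> nat (q - p)\<close> show "block_rev n I (p + int (Suc k)) = block_rev n I p - int (Suc k)"
        by simp
    qed
  qed simp
  from this[of "nat (q - p)"] assms(1) show ?thesis
    by simp
qed

lemma inj_block_rev: "inj (block_rev n I)"
proof -
  have "block_rev n I p \<noteq> block_rev n I q" if "p < q" for p q
  proof (cases "\<forall>c. p \<le> c \<and> c < q \<longrightarrow> res_in n I c")
    case True
    then show ?thesis
      using block_rev_less[OF that] by fastforce
  next
    case False
    then obtain c where "p \<le> c" "c < q" "\<not> res_in n I c"
      by blast
    then show ?thesis
      using block_rev_cut[of c p] block_rev_cut[of c q] by auto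
  qed
  then show ?thesis
    by (metis injI linorder_neqE)
qed

lemma cut_preserving_block_rev: "cut_preserving n I (block_rev n I)"
  unfolding cut_preserving_def using periodic_block_rev inj_block_rev block_rev_cut by blast

lemma inversions_block_rev: "inversions n a (block_rev n I) = block_pairs n a I"
proof
  show "inversions n a (block_rev n I) \<subseteq> block_pairs n a I"
    by (rule inversions_subset_block_pairs[OF cut_preserving_block_rev])
  show "block_pairs n a I \<subseteq> inversions n a (block_rev n I)"
    unfolding block_pairs_def inversions_def using block_rev_less by auto
qed

text \<open>Two permutations of \<open>W\<^sub>I\<close> that both invert every pair inside a block compose to one with
  no inversions: a pair inside a block is inverted twice, a pair across a wall never.\<close>

lemma strict_mono_on_comp_if_full_inversions:
  assumes u: "cut_preserving n I u" and v: "cut_preserving n I v"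
    and u_inv: "inversions n a u = block_pairs n a I" and v_inv: "inversions n a v = block_pairs n a I"
  shows "strict_mono_on (window n a) (v \<circ> u)"
proof (rule strict_mono_onI)
  fix p q assume p: "p \<in> window n a" and q: "q \<in> window n a" and "p < q"
  show "(v \<circ> u) p < (v \<circ> u) q"
  proof (cases "\<forall>c. p \<le> c \<and> c < q \<longrightarrow> res_in n I c")
    case False
    then obtain c where c: "p \<le> c" "c < q" "\<not> res_in n I c"
      by blast
    then have "v (u p) \<le> c" "\<not> v (u q) \<le> c"
      using cut_preservingD[OF u c(3), of p] cut_preservingD[OF v c(3), of "u p"]
        cut_preservingD[OF u c(3), of q] cut_preservingD[OF v c(3), of "u q"]
      by auto
    then show ?thesis
      by simp
  next
    case True
    then have "(p, q) \<in> inversions n a u"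
      using p q \<open>p < q\<close> u_inv unfolding block_pairs_def by auto
    then have "u q < u p"
      by (simp add: inversions_def)
    have "res_in n I c" if "u q \<le> c" "c < u p" for c
    proof (rule ccontr)
      assume "\<not> res_in n I c"
      then have "q \<le> c" "\<not> p \<le> c"
        using cut_preservingD[OF u, of c q] cut_preservingD[OF u, of c p] that by auto
      with \<open>p < q\<close> show False
        by simp
    qed
    then have "(u q, u p) \<in> block_pairs n a I"
      using cut_preserving_window[OF u a] p q \<open>u q < u p\<close> unfolding block_pairs_def by auto
    then have "(u q, u p) \<in> inversions n a v"
      using v_inv by simp
    then show ?thesis
      by (simp add: inversions_def)
  qed
qed

lemma comp_block_rev_eq_id:
  assumes v: "cut_preserving n I v" and v_inv: "inversions n a v = block_pairs n a I"
  shows "v \<circ> block_rev n I = id"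
proof (rule cut_preserving_eq_id[OF cut_preserving_comp[OF v cut_preserving_block_rev] a])
  show "strict_mono_on (window n a) (v \<circ> block_rev n I)"
    by (rule strict_mono_on_comp_if_full_inversions[OF cut_preserving_block_rev v
          inversions_block_rev v_inv])
qed

lemma block_rev_block_rev: "block_rev n I (block_rev n I p) = p"
  using comp_block_rev_eq_id[OF cut_preserving_block_rev inversions_block_rev]
  by (metis comp_apply id_apply)

lemma eq_block_rev_if_full_inversions:
  assumes "cut_preserving n I w" "inversions n a w = block_pairs n a I"
  shows "w = block_rev n I"
proof
  fix p
  have "w p = (w \<circ> block_rev n I) (block_rev n I p)"
    by (simp add: block_rev_block_rev)
  then show "w p = block_rev n I p"
    by (simp add: comp_block_rev_eq_id[OF assms])
qed

lemma longest_eq_block_rev: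
  assumes I: "I \<subseteq> {0..<n}"
  shows "longest n I = block_rev n I"
proof -
  have parab: "parab n I = {v. cut_preserving n I v}"
    by (rule parab_eq_cut_preserving[OF n I a])
  have clen: "clen n v = card (inversions n a v)" if "cut_preserving n I v" for v
    using clen_eq_card_inversions[OF n I a] parab that by blast
  have card_le: "card (inversions n a v) \<le> card (block_pairs n a I)" if "cut_preserving n I v" for v
    by (rule card_mono[OF finite_block_pairs inversions_subset_block_pairs[OF that]])
  have unique: "w = block_rev n I"
    if "cut_preserving n I w" "\<forall>v. cut_preserving n I v \<longrightarrow> clen n v \<le> clen n w" for w
  proof -
    have "card (block_pairs n a I) = clen n (block_rev n I)"
      using clen[OF cut_preserving_block_rev] inversions_block_rev by simp
    also have "\<dots> \<le> clen n w"
      using that(2) cut_preserving_block_rev by blast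
    also have "\<dots> = card (inversions n a w)"
      by (rule clen[OF that(1)])
    finally have "card (block_pairs n a I) \<le> card (inversions n a w)" .
    then have "inversions n a w = block_pairs n a I"
      using card_seteq[OF finite_block_pairs inversions_subset_block_pairs[OF that(1)]] by blast
    then show ?thesis
      by (rule eq_block_rev_if_full_inversions[OF that(1)])
  qed
  have maximal: "clen n v \<le> clen n (block_rev n I)" if "cut_preserving n I v" for v
    using card_le[OF that] clen[OF that] clen[OF cut_preserving_block_rev] inversions_block_rev
    by simp
  show ?thesis
    unfolding longest_def parab
  proof (rule the_equality)
    show "block_rev n I \<in> {v. cut_preserving n I v} \<and>
        (\<forall>v\<in>{v. cut_preserving n I v}. clen n v \<le> clen n (block_rev n I))"
      using cut_preserving_block_rev maximal by blast
  qed (use unique in blast)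
qed

end

section \<open>The action of \<open>h\<^sub>X\<close>\<close>

definition h_shape :: "nat \<Rightarrow> nat set \<Rightarrow> (int \<Rightarrow> int) \<Rightarrow> bool" where
  "h_shape n A G \<longleftrightarrow> (\<forall>p.
     (res_in n A (p - 1) \<longrightarrow> G p = p - 1) \<and>
     (\<not> res_in n A (p - 1) \<longrightarrow>
        p \<le> G p \<and> \<not> res_in n A (G p) \<and> (\<forall>c. p \<le> c \<and> c < G p \<longrightarrow> res_in n A c)))"

lemma h_shape_in:
  "h_shape n A G \<Longrightarrow> res_in n A i \<Longrightarrow> G (i + 1) = i"
  unfolding h_shape_def by (metis add_diff_cancel_right')

lemma h_shape_not_in:
  "h_shape n A G \<Longrightarrow> \<not> res_in n A i \<Longrightarrow>
    i + 1 \<le> G (i + 1) \<and> \<not> res_in n A (G (i + 1)) \<and> (\<forall>c. i + 1 \<le> c \<and> c < G (i + 1) \<longrightarrow> res_in n A c)"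
  unfolding h_shape_def by (metis add_diff_cancel_right')

lemma h_shape_ge:
  assumes "h_shape n A G"
  shows "p - 1 \<le> G p"
proof (cases "res_in n A (p - 1)")
  case True
  with assms show ?thesis
    unfolding h_shape_def by simp
next
  case False
  with assms have "p \<le> G p"
    unfolding h_shape_def by blast
  then show ?thesis
    by simp
qed

lemma mem_iff_h_shape:
  assumes "h_shape n A G" "i < n"
  shows "i \<in> A \<longleftrightarrow> G (int i + 1) = int i"
  using h_shape_in[OF assms(1), of "int i"] h_shape_not_in[OF assms(1), of "int i"]
    res_in_of_nat[OF assms(2), of A]
  by fastforce

lemma h_shape_empty: "h_shape n {} id"
  by (simp add: h_shape_def res_in_def)

lemma sgen_fixes_res_in:
  assumes n: "n \<ge> 2" "y < n" and A: "y \<notin> A" "(y + 1) mod n \<notin> A" and c: "res_in n A c"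
  shows "sgen n y c = c"
proof -
  have "c mod int n \<noteq> int y"
    using c A(1) by (auto simp: res_in_def)
  moreover have "(c - 1) mod int n \<noteq> int y"
  proof
    assume "(c - 1) mod int n = int y"
    then have "res_in n A (c - 1 + 1) \<longleftrightarrow> (y + 1) mod n \<in> A"
      using res_in_succ[of n A "c - 1"] n by simp
    with c A(2) show False
      by simp
  qed
  ultimately show ?thesis
    by (simp add: sgen_eq[OF n])
qed

lemma h_shape_insert:
  assumes n: "n \<ge> 2" "y < n" and A: "y \<notin> A" "(y + 1) mod n \<notin> A" and G: "h_shape n A G"
  shows "h_shape n (insert y A) (sgen n y \<circ> G)"
proof -
  let ?s = "sgen n y"
  have ins: "res_in n (insert y A) c \<longleftrightarrow> res_in n A c \<or> c mod int n = int y" for c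
    using res_in_insert[of n y A c] n by simp
  have succ_y: "\<not> res_in n A c" if "(c - 1) mod int n = int y" for c
    using res_in_succ[of n A "c - 1"] that n A(2) by simp
  have down: "(?s \<circ> G) p = p - 1" if p: "res_in n (insert y A) (p - 1)" for p
  proof (cases "res_in n A (p - 1)")
    case True
    then show ?thesis
      using G sgen_fixes_res_in[OF n A] unfolding h_shape_def by simp
  next
    case False
    then have py: "(p - 1) mod int n = int y"
      using p ins by blast
    have "G p = p"
      using G False succ_y[OF py] unfolding h_shape_def by (metis order.order_iff_strict)
    moreover have "p mod int n \<noteq> int y"
      using mod_add_one_neq[OF n(1), of "p - 1"] py by simp
    ultimately show ?thesis
      using py by (simp add: sgen_eq[OF n])
  qed
  have up: "p \<le> (?s \<circ> G) p \<and> \<not> res_in n (insert y A) ((?s \<circ> G) p) \<and>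
      (\<forall>c. p \<le> c \<and> c < (?s \<circ> G) p \<longrightarrow> res_in n (insert y A) c)"
    if p: "\<not> res_in n (insert y A) (p - 1)" for p
  proof -
    have pA: "\<not> res_in n A (p - 1)" and py: "(p - 1) mod int n \<noteq> int y"
      using p ins by auto
    define q where "q = G p"
    have q: "p \<le> q" "\<not> res_in n A q" "\<forall>c. p \<le> c \<and> c < q \<longrightarrow> res_in n A c"
      using G pA unfolding h_shape_def q_def by auto
    consider "q mod int n = int y" | "(q - 1) mod int n = int y" | "q mod int n \<noteq> int y" "(q - 1) mod int n \<noteq> int y"
      by blast
    then have "p \<le> ?s q \<and> \<not> res_in n (insert y A) (?s q) \<and>
        (\<forall>c. p \<le> c \<and> c < ?s q \<longrightarrow> res_in n (insert y A) c)"
    proof cases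
      case 1
      then have "?s q = q + 1"
        by (simp add: sgen_eq[OF n])
      moreover have "\<not> res_in n (insert y A) (q + 1)"
        using succ_y[of "q + 1"] mod_add_one_neq[OF n(1), of q] 1 ins by auto
      moreover have "res_in n (insert y A) c" if "p \<le> c" "c < q + 1" for c
        using q(3) 1 ins that by (cases "c = q") auto
      ultimately show ?thesis
        using q(1) by simp
    next
      case 2
      then have "q \<noteq> p"
        using py by auto
      then have "res_in n A (q - 1)"
        using q by auto
      with 2 show ?thesis
        using A(1) by (auto simp: res_in_def)
    next
      case 3
      then show ?thesis
        using q ins by (simp add: sgen_eq[OF n])
    qed
    then show ?thesis
      unfolding q_def by simp
  qed
  show ?thesis
    unfolding h_shape_def using down up by blast
qed

lemma h_shape_wprod_rev:
  assumes n: "n \<ge> 2"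
  shows "set ys \<subseteq> {0..<n} \<Longrightarrow> sorted_wrt (\<lambda>x y. x \<noteq> y \<and> x \<noteq> (y + 1) mod n) ys \<Longrightarrow>
    h_shape n (set ys) (wprod n (rev ys))"
proof (induction ys rule: rev_induct)
  case Nil
  then show ?case
    using h_shape_empty by (simp add: id_def)
next
  case (snoc y ys)
  then have "h_shape n (insert y (set ys)) (sgen n y \<circ> wprod n (rev ys))"
    by (intro h_shape_insert[OF n]) (auto simp: sorted_wrt_append)
  then show ?case
    by (simp add: comp_def)
qed

lemma mod_add_inj:
  fixes a j k n :: nat
  assumes "a < n" "j < n" "k < n" "(a + j) mod n = (a + k) mod n"
  shows "j = k"
  using assms mod_if[of "a + j" n] mod_if[of "a + k" n] by (auto split: if_splits)

text \<open>Listing \<open>X\<close> cyclically from \<open>\<aleph> \<notin> X\<close> on, the successor of an element never occurs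
  earlier in the list.\<close>

lemma h_shape_hX:
  assumes n: "n \<ge> 2" and X: "X \<subset> {0..<n}"
  shows "h_shape n X (hX n X)"
proof -
  define a where "a = Min ({0..<n} - X)"
  have "a \<in> {0..<n} - X"
    unfolding a_def using X by (intro Min_in) auto
  then have a: "a < n" "a \<notin> X"
    by auto
  define f where "f k = (a + k) mod n" for k
  define ys where "ys = filter (\<lambda>x. x \<in> X) (map f [1..<n])"
  have "f 0 \<notin> X"
    using a by (simp add: f_def)
  then have hX: "hX n X = wprod n (rev ys)"
    using n unfolding hX_def Let_def a_def[symmetric] ys_def f_def[abs_def]
    by (simp add: upt_conv_Cons[of 0 n])
  have set_ys: "set ys = X"
  proof -
    have "x \<in> f ` {1..<n}" if "x \<in> X" for x
    proof -
      have x: "x < n" "x \<noteq> a"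
        using that X a by auto
      define j where "j = (x + n - a) mod n"
      have "f j = x"
        using x a unfolding f_def j_def by (simp add: mod_add_right_eq)
      moreover have "j \<noteq> 0"
      proof
        assume "j = 0"
        then have "f j = a"
          using a by (simp add: f_def)
        with \<open>f j = x\<close> x show False
          by simp
      qed
      moreover have "j < n"
        using n by (simp add: j_def)
      ultimately show ?thesis
        by (intro image_eqI[where x = j]) auto
    qed
    then show ?thesis
      using X by (auto simp: ys_def)
  qed
  have "sorted_wrt (\<lambda>x y. x \<noteq> y \<and> x \<noteq> (y + 1) mod n) ys"
  proof -
    have "f j \<noteq> f k \<and> f j \<noteq> (f k + 1) mod n" if jk: "1 \<le> j" "j < k" "k < n" for j k
    proof
      show "f j \<noteq> f k"
        using mod_add_inj[OF a(1), of j k] jk unfolding f_def by auto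
      have succ: "(f k + 1) mod n = (a + k + 1) mod n"
        unfolding f_def by (simp add: mod_Suc_eq)
      show "f j \<noteq> (f k + 1) mod n"
      proof (cases "k + 1 < n")
        case True
        then show ?thesis
          using succ mod_add_inj[OF a(1), of j "k + 1"] jk unfolding f_def by auto
      next
        case False
        then have "a + k + 1 = a + n"
          using jk by simp
        then have "(f k + 1) mod n = (a + n) mod n"
          by (simp only: succ)
        then have "(f k + 1) mod n = (a + 0) mod n"
          by simp
        then show ?thesis
          using mod_add_inj[OF a(1), of j 0] jk unfolding f_def by auto
      qed
    qed
    then have "sorted_wrt (\<lambda>x y. x \<noteq> y \<and> x \<noteq> (y + 1) mod n) (map f [1..<n])"
      unfolding sorted_wrt_map by (rule sorted_wrt_mono_rel[OF _ sorted_wrt_upt]) auto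
    then show ?thesis
      unfolding ys_def by (rule sorted_wrt_filter)
  qed
  moreover have "set ys \<subseteq> {0..<n}"
    using set_ys X by blast
  ultimately have "h_shape n (set ys) (wprod n (rev ys))"
    by (intro h_shape_wprod_rev[OF n])
  then show ?thesis
    unfolding hX set_ys .
qed

lemma bij_hX: "n \<ge> 2 \<Longrightarrow> bij (hX n X)"
  unfolding hX_def Let_def by (rule bij_wprod) auto

section \<open>Recovering \<open>I\<close> and \<open>X\<close> from \<open>w\<^sub>I h\<^sub>X\<close>\<close>

text \<open>For a bijection \<open>w\<close>, \<open>left_descent w i\<close> says \<open>w\<^sup>-\<^sup>1 (i + 1) < w\<^sup>-\<^sup>1 i\<close>, i.e. that \<open>s\<^sub>i\<close> is a
  left descent of \<open>w\<close>; \<open>right_descent w p\<close> says that \<open>s\<^sub>p\<close> is a right descent.\<close>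

definition left_descent :: "(int \<Rightarrow> int) \<Rightarrow> int \<Rightarrow> bool" where
  "left_descent w i \<longleftrightarrow> (\<exists>x b. b < x \<and> w x = i \<and> w b = i + 1)"

definition right_descent :: "(int \<Rightarrow> int) \<Rightarrow> int \<Rightarrow> bool" where
  "right_descent w p \<longleftrightarrow> w (p + 1) < w p"

lemma res_in_succ_if_tau_subset:
  assumes "n \<ge> 2" "tau n I \<subseteq> X" "res_in n I c"
  shows "res_in n X (c + 1)"
proof -
  have "(nat (c mod int n) + 1) mod n \<in> X"
    using assms(2,3) by (auto simp: tau_def res_in_def)
  then show ?thesis
    using res_in_succ[of n X c] assms(1) by simp
qed

context
  fixes n :: nat and J Y :: "nat set" and h :: "int \<Rightarrow> int" and a :: nat
  assumes n: "n \<ge> 2" and a: "a < n" "a \<notin> J"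
    and tau: "\<And>c. res_in n J c \<Longrightarrow> res_in n Y (c + 1)"
    and h: "h_shape n Y h" and surj: "surj h"
begin

lemma left_descent_if_res_in:
  assumes J: "res_in n J i"
  shows "left_descent (block_rev n J \<circ> h) i"
proof -
  define q where "q = block_rev n J (i + 1)"
  have rev_i: "block_rev n J i = q + 1"
    using block_rev_step[OF n a J] unfolding q_def by simp
  have "res_in n J q"
  proof (rule ccontr)
    assume "\<not> res_in n J q"
    then have "i + 1 \<le> q" "\<not> i \<le> q"
      using block_rev_cut[OF n a, of q "i + 1"] block_rev_cut[OF n a, of q i] rev_i
      unfolding q_def by auto
    then show False
      by simp
  qed
  then have "h (q + 1 + 1) = q + 1"
    using h_shape_in[OF h] tau by blast
  then have x: "(block_rev n J \<circ> h) (q + 2) = i"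
    using rev_i block_rev_block_rev[OF n a, of i] by (simp add: add.assoc)
  obtain b where "h b = q"
    using surj by (metis surjD)
  then have "(block_rev n J \<circ> h) b = i + 1" "b < q + 2"
    using block_rev_block_rev[OF n a, of "i + 1"] h_shape_ge[OF h, of b] unfolding q_def by auto
  with x show ?thesis
    unfolding left_descent_def by blast
qed

lemma right_descent_if_res_in:
  assumes J: "res_in n J i"
  shows "right_descent (block_rev n J \<circ> h) (i + 1)"
proof -
  have "res_in n Y (i + 1)"
    using tau J by blast
  then have "h (i + 1 + 1) = i + 1"
    by (rule h_shape_in[OF h])
  then have w2: "(block_rev n J \<circ> h) (i + 1 + 1) = block_rev n J (i + 1)"
    by simp
  show ?thesis
  proof (cases "res_in n Y i")
    case True
    then show ?thesis
      using w2 h_shape_in[OF h True] block_rev_step[OF n a J] by (simp add: right_descent_def)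
  next
    case False
    define c where "c = h (i + 1) - 1"
    have hi: "i + 1 \<le> h (i + 1)" "\<not> res_in n Y (h (i + 1))"
      using h_shape_not_in[OF h False] by auto
    then have "h (i + 1) \<noteq> i + 1" "\<not> res_in n J c"
      using \<open>res_in n Y (i + 1)\<close> tau[of c] unfolding c_def by auto
    then have "block_rev n J (i + 1) \<le> c" "\<not> block_rev n J (h (i + 1)) \<le> c"
      using block_rev_cut[OF n a, of c "i + 1"] block_rev_cut[OF n a, of c "h (i + 1)"] hi(1)
      unfolding c_def by auto
    then show ?thesis
      using w2 by (simp add: right_descent_def)
  qed
qed

lemma not_res_in_succ_if_left_descent:
  assumes nJ: "\<not> res_in n J i" and L: "left_descent (block_rev n J \<circ> h) i"
  shows "\<not> res_in n Y (i + 1)"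
proof
  assume Y1: "res_in n Y (i + 1)"
  obtain x b where xb: "b < x" "block_rev n J (h x) = i" "block_rev n J (h b) = i + 1"
    using L unfolding left_descent_def by auto
  have "h x \<le> i" "\<not> h b \<le> i"
    using block_rev_cut[OF n a nJ, of "h x"] block_rev_cut[OF n a nJ, of "h b"] xb by auto
  moreover have "b \<le> i"
    using h_shape_ge[OF h, of x] \<open>h x \<le> i\<close> xb(1) by simp
  moreover have "h b \<le> i"
  proof (cases "res_in n Y (b - 1)")
    case True
    then show ?thesis
      using h \<open>b \<le> i\<close> unfolding h_shape_def by simp
  next
    case False
    define c where "c = h b - 1"
    have "\<not> res_in n Y (h b)"
      using h False unfolding h_shape_def by blast
    then have "h b \<noteq> i + 1" "\<not> res_in n J c"
      using Y1 tau[of c] unfolding c_def by auto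
    moreover have "\<not> block_rev n J (h b) \<le> c"
      using block_rev_cut[OF n a \<open>\<not> res_in n J c\<close>, of "h b"] unfolding c_def by simp
    ultimately show ?thesis
      using xb(3) unfolding c_def by simp
  qed
  ultimately show False
    by simp
qed

lemma not_right_descent_if_not_res_in:
  assumes nY: "\<not> res_in n Y (i + 1)"
  shows "\<not> right_descent (block_rev n J \<circ> h) (i + 1)"
proof -
  define c where "c = h (i + 1 + 1) - 1"
  have hi2: "i + 1 + 1 \<le> h (i + 1 + 1)" "\<not> res_in n Y (h (i + 1 + 1))"
    using h_shape_not_in[OF h nY] by auto
  then have nc: "\<not> res_in n J c"
    using tau[of c] unfolding c_def by auto
  have "h (i + 1) \<le> i + 1"
  proof (cases "res_in n Y i")
    case True
    then show ?thesis
      using h_shape_in[OF h] by simp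
  next
    case False
    then show ?thesis
      using h_shape_not_in[OF h False] nY by (meson not_le order_refl)
  qed
  then have "block_rev n J (h (i + 1)) \<le> c" "\<not> block_rev n J (h (i + 1 + 1)) \<le> c"
    using block_rev_cut[OF n a nc, of "h (i + 1)"] block_rev_cut[OF n a nc, of "h (i + 1 + 1)"] hi2(1)
    unfolding c_def by auto
  then show ?thesis
    by (simp add: right_descent_def add.assoc)
qed

lemma res_in_iff_descents:
  "res_in n J i \<longleftrightarrow>
    left_descent (block_rev n J \<circ> h) i \<and> right_descent (block_rev n J \<circ> h) (i + 1)"
  using left_descent_if_res_in right_descent_if_res_in not_res_in_succ_if_left_descent
    not_right_descent_if_not_res_in
  by blast

end

lemma set_eq_if_same_members_below:
  "A \<subseteq> {0..<n} \<Longrightarrow> B \<subseteq> {0..<n} \<Longrightarrow> (\<And>i. i < n \<Longrightarrow> i \<in> A \<longleftrightarrow> i \<in> B) \<Longrightarrow> A = B"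
  by auto

theorem lemma10p8:
  fixes n :: nat and I I' X X' :: "nat set"
  assumes "n \<ge> 2"
    and "I \<subset> {0..<n}" and "I' \<subset> {0..<n}"
    and "X \<subset> {0..<n}" and "X' \<subset> {0..<n}"
    and "tau n I \<subseteq> X" and "tau n I' \<subseteq> X'"
    and "longest n I \<circ> hX n X = longest n I' \<circ> hX n X'"
  shows "I = I' \<and> X = X'"
proof -
  note n = assms(1)
  obtain a a' where a: "a < n" "a \<notin> I" and a': "a' < n" "a' \<notin> I'"
    using psubset_imp_ex_mem[OF assms(2)] psubset_imp_ex_mem[OF assms(3)] by auto
  have h: "h_shape n X (hX n X)" and h': "h_shape n X' (hX n X')"
    using h_shape_hX n assms(4,5) by blast+
  have w: "block_rev n I \<circ> hX n X = block_rev n I' \<circ> hX n X'"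
    using assms(8) longest_eq_block_rev[OF n a] longest_eq_block_rev[OF n a'] assms(2,3) by auto
  have "res_in n I c \<longleftrightarrow> res_in n I' c" for c
    using res_in_iff_descents[OF n a res_in_succ_if_tau_subset[OF n assms(6)] h
        bij_is_surj[OF bij_hX[OF n]], of c]
      res_in_iff_descents[OF n a' res_in_succ_if_tau_subset[OF n assms(7)] h'
        bij_is_surj[OF bij_hX[OF n]], of c]
    unfolding w by blast
  then have "I = I'"
    using assms(2,3) by (intro set_eq_if_same_members_below) (auto simp flip: res_in_of_nat)
  with w have "hX n X = hX n X'"
    using inj_block_rev[OF n a] by (simp add: fun_eq_iff inj_eq)
  then have "X = X'"
    using assms(4,5)
    by (intro set_eq_if_same_members_below) (auto simp: mem_iff_h_shape[OF h] mem_iff_h_shape[OF h'])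
  with \<open>I = I'\<close> show ?thesis ..
qed

end
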